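(* Let $Z$ be any $n\times n$ complex matrix with singular values $r_1,\dots,r_n$, and let $U$ be any $n\times n$ unitary matrix. Then $$\prod_{k=1}^n\frac{|1-r_k|}{1+r_k}\le \frac{|\det(I-Z^*Z)|}{|\det(I-UZ)|^2},$$ where a fraction with zero denominator is interpreted as $+\infty$.
   Context: $Z^*$ denotes the conjugate transpose of $Z$ and $I$ the $n\times n$ identity matrix. *)

theory Defs
  imports "Jordan_Normal_Form.Char_Poly"
begin

definition conj_transpose :: "complex mat \<Rightarrow> complex mat" where
  "conj_transpose A = transpose_mat (map_mat cnj A)"

definition unitary_mat :: "nat \<Rightarrow> complex mat \<Rightarrow> bool" where
  "unitary_mat n U \<longleftrightarrow> U \<in> carrier_mat n n \<and> conj_transpose U * U = 1\<^sub>m n"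

text \<open>rs lists the singular values of the n x n matrix Z, counted with
  multiplicity: the nonnegative square roots of the eigenvalues of Z* Z,
  i.e. char_poly (Z* Z) = prod_k (X - r_k^2).\<close>
definition singular_values :: "nat \<Rightarrow> complex mat \<Rightarrow> real list \<Rightarrow> bool" where
  "singular_values n Z rs \<longleftrightarrow> Z \<in> carrier_mat n n \<and> length rs = n \<and>
     (\<forall>r \<in> set rs. r \<ge> 0) \<and>
     char_poly (conj_transpose Z * Z) = (\<Prod>r\<leftarrow>rs. [:- complex_of_real (r\<^sup>2), 1:])"

end

theory Submission
  imports Defs "Jordan_Normal_Form.Schur_Decomposition" "HOL-Analysis.L2_Norm"
begin

text \<open>Let \<open>V\<close> be unitary such that \<open>V\<^sup>* (Z\<^sup>* Z) V = (Z V)\<^sup>* (Z V)\<close> is upper triangular (Schur).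
  Its diagonal consists of the eigenvalues \<open>r\<^sub>k\<^sup>2\<close> of \<open>Z\<^sup>* Z\<close> and also of the squared column norms
  of \<open>Z V\<close>, so the columns of \<open>Z V\<close> have norms \<open>r\<^sub>k\<close>.
  Since \<open>I - U Z = (V - U Z V) V\<^sup>*\<close>, Hadamard's inequality and the triangle inequality for each column
  give \<open>|det (I - U Z)| \<le> \<Prod>(1 + r\<^sub>k)\<close>, while \<open>|det (I - Z\<^sup>* Z)| = \<Prod>|1 - r\<^sub>k| (1 + r\<^sub>k)\<close>.
  Dividing the second by the square of the first gives the bound.\<close>

section \<open>Conjugate transpose and column norms\<close>

interpretation cnj_hom: comm_ring_hom cnj
  by unfold_locales auto

lemma conj_transpose_carrier_mat [simp]:
  "A \<in> carrier_mat n m \<Longrightarrow> conj_transpose A \<in> carrier_mat m n"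
  unfolding conj_transpose_def by auto

lemma dim_conj_transpose [simp]:
  "dim_row (conj_transpose A) = dim_col A" "dim_col (conj_transpose A) = dim_row A"
  unfolding conj_transpose_def by auto

lemma index_conj_transpose [simp]:
  "i < dim_col A \<Longrightarrow> j < dim_row A \<Longrightarrow> conj_transpose A $$ (i, j) = cnj (A $$ (j, i))"
  unfolding conj_transpose_def by auto

lemma conj_transpose_mult:
  assumes "A \<in> carrier_mat n k" and "B \<in> carrier_mat k m"
  shows "conj_transpose (A * B) = conj_transpose B * conj_transpose A"
  unfolding conj_transpose_def cnj_hom.mat_hom_mult[OF assms]
  using assms by (intro transpose_mult) auto

lemma det_conj_transpose:
  assumes "A \<in> carrier_mat n n"
  shows "det (conj_transpose A) = cnj (det A)"
  unfolding conj_transpose_def using assms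
  by (simp add: det_transpose)

lemma conj_transpose_mult_self_index:
  assumes "A \<in> carrier_mat n m" and "i < m" and "j < m"
  shows "(conj_transpose A * A) $$ (i, j) = col A j \<bullet>c col A i"
  using assms by (simp add: scalar_prod_def atLeast0LessThan mult.commute)

definition vec_l2_norm :: "complex vec \<Rightarrow> real" where
  "vec_l2_norm v = L2_set (\<lambda>i. cmod (v $ i)) {..<dim_vec v}"

lemma vec_l2_norm_nonneg: "vec_l2_norm v \<ge> 0"
  unfolding vec_l2_norm_def by (rule L2_set_nonneg)

lemma cscalar_prod_self: "v \<bullet>c v = complex_of_real ((vec_l2_norm v)\<^sup>2)"
proof -
  have "v \<bullet>c v = (\<Sum>i<dim_vec v. v $ i * cnj (v $ i))"
    by (simp add: scalar_prod_def atLeast0LessThan)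
  also have "\<dots> = complex_of_real (\<Sum>i<dim_vec v. (cmod (v $ i))\<^sup>2)"
    by (simp only: complex_norm_square of_real_sum)
  also have "\<dots> = complex_of_real ((vec_l2_norm v)\<^sup>2)"
    unfolding vec_l2_norm_def L2_set_def by (simp add: sum_nonneg)
  finally show ?thesis .
qed

lemma vec_l2_norm_eq_0_iff: "vec_l2_norm v = 0 \<longleftrightarrow> v = 0\<^sub>v (dim_vec v)"
proof -
  have "vec_l2_norm v = 0 \<longleftrightarrow> v \<bullet>c v = 0"
    unfolding cscalar_prod_self by simp
  also have "\<dots> \<longleftrightarrow> v = 0\<^sub>v (dim_vec v)"
    by (rule conjugate_square_eq_0_vec) simp
  finally show ?thesis .
qed

lemma vec_l2_norm_smult: "vec_l2_norm (c \<cdot>\<^sub>v v) = cmod c * vec_l2_norm v"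
  unfolding vec_l2_norm_def L2_set_right_distrib[OF norm_ge_zero]
  by (intro L2_set_cong) (auto simp: norm_mult)

lemma vec_l2_norm_minus_le:
  assumes "dim_vec u = dim_vec v"
  shows "vec_l2_norm (u - v) \<le> vec_l2_norm u + vec_l2_norm v"
proof -
  have "vec_l2_norm (u - v) \<le> L2_set (\<lambda>i. cmod (u $ i) + cmod (v $ i)) {..<dim_vec v}"
    unfolding vec_l2_norm_def using assms
    by (auto intro: L2_set_mono simp: norm_triangle_ineq4)
  also have "\<dots> \<le> vec_l2_norm u + vec_l2_norm v"
    unfolding vec_l2_norm_def using assms by (simp add: L2_set_triangle_ineq)
  finally show ?thesis .
qed

lemma vec_l2_norm_tail_le:
  assumes "dim_vec v = Suc m"
  shows "vec_l2_norm (vec m (\<lambda>i. v $ Suc i)) \<le> vec_l2_norm v"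
proof -
  have "(\<Sum>i<m. (cmod (v $ Suc i))\<^sup>2) \<le> (\<Sum>i<Suc m. (cmod (v $ i))\<^sup>2)"
    unfolding sum.lessThan_Suc_shift[of "\<lambda>i. (cmod (v $ i))\<^sup>2"] by simp
  then show ?thesis
    unfolding vec_l2_norm_def L2_set_def using assms by simp
qed

lemma col_conj_transpose_mult_self_diag:
  assumes "A \<in> carrier_mat n m" and "j < m"
  shows "(conj_transpose A * A) $$ (j, j) = complex_of_real ((vec_l2_norm (col A j))\<^sup>2)"
  unfolding conj_transpose_mult_self_index[OF assms assms(2)] cscalar_prod_self ..

lemma vec_l2_norm_col_eq_if_gram_eq:
  assumes "A \<in> carrier_mat n m" and "B \<in> carrier_mat k m" and "j < m"
    and "conj_transpose A * A = conj_transpose B * B"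
  shows "vec_l2_norm (col A j) = vec_l2_norm (col B j)"
proof -
  have "(vec_l2_norm (col A j))\<^sup>2 = (vec_l2_norm (col B j))\<^sup>2"
    using col_conj_transpose_mult_self_diag[OF assms(1,3)]
      col_conj_transpose_mult_self_diag[OF assms(2,3)] assms(4)
    by (metis of_real_eq_iff)
  then show ?thesis by (simp add: vec_l2_norm_nonneg)
qed

lemma cscalar_prod_smult:
  assumes "v \<in> carrier_vec n" and "w \<in> carrier_vec n"
  shows "(a \<cdot>\<^sub>v v) \<bullet>c (b \<cdot>\<^sub>v w) = a * cnj b * (v \<bullet>c w)"
  using assms by (simp add: scalar_prod_def sum_distrib_left ac_simps)

section \<open>Unitary matrices\<close>

lemma unitary_matD:
  assumes "unitary_mat n U"
  shows "U \<in> carrier_mat n n" "conj_transpose U * U = 1\<^sub>m n" "U * conj_transpose U = 1\<^sub>m n"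
  using assms mat_mult_left_right_inverse[of "conj_transpose U" n U]
  unfolding unitary_mat_def by auto

lemma conj_transpose_one [simp]: "conj_transpose (1\<^sub>m n) = 1\<^sub>m n"
  by (rule eq_matI) auto

lemma unitary_mat_one: "unitary_mat n (1\<^sub>m n)"
  unfolding unitary_mat_def by simp

lemma unitary_mat_conj_transpose:
  assumes "unitary_mat n U"
  shows "unitary_mat n (conj_transpose U)"
proof -
  have "conj_transpose (conj_transpose U) = U"
    by (rule eq_matI) auto
  then show ?thesis
    using unitary_matD[OF assms] unfolding unitary_mat_def by simp
qed

lemma unitary_mat_mult:
  assumes "unitary_mat n U" and "unitary_mat n V"
  shows "unitary_mat n (U * V)"
proof -
  note U = unitary_matD[OF assms(1)] and V = unitary_matD[OF assms(2)]
  have "conj_transpose (U * V) * (U * V)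
      = conj_transpose V * (conj_transpose U * U * V)"
    unfolding conj_transpose_mult[OF U(1) V(1)] using U(1) V(1)
    by (simp add: assoc_mult_mat[of _ n n _ n _ n])
  then show ?thesis
    using U V unfolding unitary_mat_def by simp
qed

lemma norm_det_unitary:
  assumes "unitary_mat n U"
  shows "cmod (det U) = 1"
proof -
  note U = unitary_matD[OF assms]
  have "cnj (det U) * det U = 1"
    using det_mult[OF conj_transpose_carrier_mat[OF U(1)] U(1)] U(2)
    by (simp add: det_conj_transpose[OF U(1)])
  then have "(cmod (det U))\<^sup>2 = 1"
    by (metis complex_norm_square mult.commute of_real_eq_1_iff)
  then show ?thesis
    using norm_ge_zero[of "det U"] unfolding power2_eq_1_iff by linarith
qed

lemma vec_l2_norm_col_unitary:
  assumes "unitary_mat n U" and "j < n"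
  shows "vec_l2_norm (col U j) = 1"
proof -
  have "complex_of_real ((vec_l2_norm (col U j))\<^sup>2) = 1"
    using col_conj_transpose_mult_self_diag[of U n n j] unitary_matD[OF assms(1)] assms(2)
    by simp
  then have "(vec_l2_norm (col U j))\<^sup>2 = 1"
    by (simp only: of_real_eq_1_iff)
  then show ?thesis
    using vec_l2_norm_nonneg[of "col U j"] unfolding power2_eq_1_iff by linarith
qed

lemma conj_transpose_unitary_mult_self:
  assumes "unitary_mat n U" and "A \<in> carrier_mat n m"
  shows "conj_transpose (U * A) * (U * A) = conj_transpose A * A"
proof -
  note U = unitary_matD[OF assms(1)]
  have "conj_transpose (U * A) * (U * A) = conj_transpose A * (conj_transpose U * U * A)"
    unfolding conj_transpose_mult[OF U(1) assms(2)] using U(1) assms(2)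
    by (simp add: assoc_mult_mat[of _ m n _ n _ m] assoc_mult_mat[of _ n n _ n _ m])
  then show ?thesis using U(2) assms(2) by simp
qed

lemma vec_l2_norm_col_unitary_mult:
  assumes "unitary_mat n U" and "A \<in> carrier_mat n m" and "j < m"
  shows "vec_l2_norm (col (U * A) j) = vec_l2_norm (col A j)"
  using unitary_matD(1)[OF assms(1)] assms
  by (intro vec_l2_norm_col_eq_if_gram_eq[of _ n m _ n] conj_transpose_unitary_mult_self) auto

lemma unitary_mat_of_cols:
  assumes "set ws \<subseteq> carrier_vec n" and "length ws = n"
    and "\<And>i j. i < n \<Longrightarrow> j < n \<Longrightarrow> ws ! i \<bullet>c ws ! j = (if i = j then 1 else 0)"
  shows "unitary_mat n (mat_of_cols n ws)"
proof -
  let ?W = "mat_of_cols n ws"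
  have W: "?W \<in> carrier_mat n n" using mat_of_cols_carrier(1)[of n ws] assms(2) by simp
  have "conj_transpose ?W * ?W = 1\<^sub>m n"
  proof (rule eq_matI)
    fix i j assume "i < dim_row (1\<^sub>m n)" and "j < dim_col (1\<^sub>m n)"
    then have i: "i < n" and j: "j < n" by auto
    then show "(conj_transpose ?W * ?W) $$ (i, j) = 1\<^sub>m n $$ (i, j)"
      unfolding conj_transpose_mult_self_index[OF W i j]
      using assms by (auto simp: subsetD)
  qed (use W in auto)
  then show ?thesis unfolding unitary_mat_def using W by simp
qed

definition vec_normalize :: "complex vec \<Rightarrow> complex vec" where
  "vec_normalize v = complex_of_real (1 / vec_l2_norm v) \<cdot>\<^sub>v v"

lemma vec_l2_norm_vec_normalize:
  "vec_l2_norm v \<noteq> 0 \<Longrightarrow> vec_l2_norm (vec_normalize v) = 1"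
  unfolding vec_normalize_def vec_l2_norm_smult
  by (simp add: norm_divide abs_of_nonneg[OF vec_l2_norm_nonneg])

lemma smult_vec_normalize: "complex_of_real (vec_l2_norm v) \<cdot>\<^sub>v vec_normalize v = v"
proof (cases "vec_l2_norm v = 0")
  case True
  then obtain k where "v = 0\<^sub>v k" unfolding vec_l2_norm_eq_0_iff by blast
  then show ?thesis by (intro eq_vecI) (auto simp: vec_normalize_def)
qed (simp add: vec_normalize_def smult_smult_assoc)

lemma unitary_mat_of_corthogonal:
  assumes ws: "set ws \<subseteq> carrier_vec n" "length ws = n" and orth: "corthogonal ws"
  shows "unitary_mat n (mat_of_cols n (map vec_normalize ws))"
proof (rule unitary_mat_of_cols)
  show "set (map vec_normalize ws) \<subseteq> carrier_vec n" "length (map vec_normalize ws) = n"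
    using ws unfolding vec_normalize_def by auto
  have nz: "vec_l2_norm (ws ! i) \<noteq> 0" if "i < n" for i
    using corthogonalD[OF orth, of i i] that ws(2) cscalar_prod_self[of "ws ! i"] by auto
  fix i j assume i: "i < n" and j: "j < n"
  show "map vec_normalize ws ! i \<bullet>c map vec_normalize ws ! j = (if i = j then 1 else 0)"
  proof (cases "i = j")
    case True
    then show ?thesis
      using vec_l2_norm_vec_normalize[OF nz[OF j]] ws(2) j by (simp add: cscalar_prod_self)
  next
    case False
    then show ?thesis
      using corthogonalD[OF orth, of i j] i j ws
      by (simp add: vec_normalize_def cscalar_prod_smult[of _ n] subsetD)
  qed
qed

lemma exists_unitary_col0_multiple:
  assumes v: "v \<in> carrier_vec n" and n: "0 < n"
  shows "\<exists>W c. unitary_mat n W \<and> v = c \<cdot>\<^sub>v col W 0"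
proof (cases "v = 0\<^sub>v n")
  case True
  then show ?thesis using unitary_mat_one[of n] v by (intro exI[of _ "1\<^sub>m n"] exI[of _ 0]) auto
next
  case False
  interpret cof_vec_space n "TYPE(complex)" .
  define b where "b = basis_completion v"
  from basis_completion[OF v False, folded b_def]
  have b: "set b \<subseteq> carrier_vec n" "distinct b" "\<not> lin_dep (set b)" "hd b = v" "length b = n"
    by auto
  then obtain vs where bv: "b = v # vs" using n by (cases b) auto
  define ws where "ws = gram_schmidt n b"
  from gram_schmidt_result[OF b(1-3) ws_def]
  have ws: "set ws \<subseteq> carrier_vec n" "length ws = n" "corthogonal ws"
    using b(5) by auto
  have "hd ws = v"
    using gram_schmidt_hd[OF v, of vs] unfolding ws_def bv .
  then have "map vec_normalize ws ! 0 = vec_normalize v"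
    using ws(2) n by (cases ws) auto
  then have "col (mat_of_cols n (map vec_normalize ws)) 0 = vec_normalize v"
    using ws n v by (subst col_mat_of_cols) (auto simp: vec_normalize_def)
  then have "v = complex_of_real (vec_l2_norm v) \<cdot>\<^sub>v col (mat_of_cols n (map vec_normalize ws)) 0"
    by (simp add: smult_vec_normalize)
  then show ?thesis using unitary_mat_of_corthogonal[OF ws] by blast
qed

lemma col0_conj_transpose_unitary_mult:
  assumes W: "unitary_mat n W" and A: "A \<in> carrier_mat n m" and m: "0 < m"
    and col_A: "col A 0 = c \<cdot>\<^sub>v col W 0"
  shows "col (conj_transpose W * A) 0 = c \<cdot>\<^sub>v unit_vec n 0"
proof (cases "n = 0")
  case True
  then show ?thesis using W A m unfolding unitary_mat_def by (intro eq_vecI) auto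
next
  case False
  note W = unitary_matD[OF W]
  have "col (conj_transpose W * A) 0 = conj_transpose W *\<^sub>v (c \<cdot>\<^sub>v col W 0)"
    using col_mult2[OF conj_transpose_carrier_mat[OF W(1)] A m] col_A by simp
  also have "\<dots> = c \<cdot>\<^sub>v col (conj_transpose W * W) 0"
    using W(1) False col_mult2[OF conj_transpose_carrier_mat[OF W(1)] W(1), of 0]
    by (simp add: mult_mat_vec[of _ n n])
  also have "\<dots> = c \<cdot>\<^sub>v unit_vec n 0"
    using W(2) False by simp
  finally show ?thesis .
qed

section \<open>Hadamard's inequality\<close>

lemma det_col0_unit_vec:
  assumes A: "A \<in> carrier_mat (Suc m) (Suc m)" and col_A: "col A 0 = c \<cdot>\<^sub>v unit_vec (Suc m) 0"
  shows "det A = c * det (mat_delete A 0 0)"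
proof -
  have A0: "A $$ (i, 0) = (if i = 0 then c else 0)" if "i < Suc m" for i
    using arg_cong[OF col_A, of "\<lambda>v. v $ i"] A that by auto
  have "det A = (\<Sum>i<Suc m. A $$ (i, 0) * cofactor A i 0)"
    by (rule laplace_expansion_column[OF A]) simp
  also have "\<dots> = c * cofactor A 0 0"
    unfolding sum.lessThan_Suc_shift by (simp add: A0)
  finally show ?thesis by (simp add: cofactor_def)
qed

text \<open>Induction on the size: a unitary change of basis on the left keeps the modulus of the
  determinant and the column norms, and makes the first column a multiple of the first unit vector.\<close>
lemma hadamard_inequality:
  assumes "M \<in> carrier_mat n n"
  shows "cmod (det M) \<le> (\<Prod>j<n. vec_l2_norm (col M j))"
  using assms
proof (induction n arbitrary: M)
  case 0
  then show ?case by (simp add: det_def)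
next
  case (Suc m)
  have M: "M \<in> carrier_mat (Suc m) (Suc m)" by fact
  obtain W c where W: "unitary_mat (Suc m) W" and col_M: "col M 0 = c \<cdot>\<^sub>v col W 0"
    using exists_unitary_col0_multiple[of "col M 0" "Suc m"] M by auto
  note Wc = unitary_matD[OF W]
  define M' where "M' = conj_transpose W * M"
  have M': "M' \<in> carrier_mat (Suc m) (Suc m)"
    unfolding M'_def by (rule mult_carrier_mat[OF conj_transpose_carrier_mat[OF Wc(1)] M])
  have "M = W * M'"
    unfolding M'_def using Wc M by (simp flip: assoc_mult_mat[of _ "Suc m" "Suc m" _ "Suc m" _ "Suc m"])
  then have det_M: "cmod (det M) = cmod (det M')"
    using det_mult[OF Wc(1) M'] norm_det_unitary[OF W] by (simp add: norm_mult)
  have col_norm: "vec_l2_norm (col M' j) = vec_l2_norm (col M j)" if "j < Suc m" for j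
    unfolding M'_def using unitary_mat_conj_transpose[OF W] M that
    by (rule vec_l2_norm_col_unitary_mult)
  have norm_c: "cmod c = vec_l2_norm (col M 0)"
    using col_M vec_l2_norm_col_unitary[OF W] by (simp add: vec_l2_norm_smult)
  define D where "D = mat_delete M' 0 0"
  have D: "D \<in> carrier_mat m m" unfolding D_def using mat_delete_carrier[OF M'] by simp
  have "col M' 0 = c \<cdot>\<^sub>v unit_vec (Suc m) 0"
    unfolding M'_def by (rule col0_conj_transpose_unitary_mult[OF W M _ col_M]) simp
  then have det_M': "det M' = c * det D"
    unfolding D_def using M' by (rule det_col0_unit_vec[rotated])
  have col_D: "vec_l2_norm (col D j) \<le> vec_l2_norm (col M (Suc j))" if "j < m" for j
  proof -
    have "col D j = vec m (\<lambda>i. col M' (Suc j) $ Suc i)"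
      unfolding D_def using M' that by (intro eq_vecI) (auto simp: mat_delete_def)
    then show ?thesis
      using vec_l2_norm_tail_le[of "col M' (Suc j)" m] col_norm[of "Suc j"] M' that by simp
  qed
  have "cmod (det M) = vec_l2_norm (col M 0) * cmod (det D)"
    unfolding det_M det_M' norm_c[symmetric] by (simp add: norm_mult)
  also have "\<dots> \<le> vec_l2_norm (col M 0) * (\<Prod>j<m. vec_l2_norm (col M (Suc j)))"
  proof (rule mult_left_mono)
    have "cmod (det D) \<le> (\<Prod>j<m. vec_l2_norm (col D j))" by (rule Suc.IH[OF D])
    also have "\<dots> \<le> (\<Prod>j<m. vec_l2_norm (col M (Suc j)))"
      using col_D by (intro prod_mono) (simp add: vec_l2_norm_nonneg)
    finally show "cmod (det D) \<le> (\<Prod>j<m. vec_l2_norm (col M (Suc j)))" .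
  qed (rule vec_l2_norm_nonneg)
  also have "\<dots> = (\<Prod>j<Suc m. vec_l2_norm (col M j))"
    by (rule prod.lessThan_Suc_shift[symmetric])
  finally show ?case .
qed

section \<open>Unitary triangularisation\<close>

lemma similar_mat_unitary:
  assumes W: "unitary_mat n W" and A: "A \<in> carrier_mat n n"
  shows "similar_mat A (conj_transpose W * A * W)"
proof -
  note W = unitary_matD[OF W]
  have "W * (conj_transpose W * A * W) * conj_transpose W
      = (W * conj_transpose W) * A * (W * conj_transpose W)"
    using W(1) A by (simp add: assoc_mult_mat[of _ n n _ n _ n] mult_carrier_mat[of _ n n _ n])
  then have "similar_mat_wit A (conj_transpose W * A * W) W (conj_transpose W)"
    using W A by (intro similar_mat_witI) auto
  then show ?thesis unfolding similar_mat_def by blast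
qed

lemma block_form_col0_unit_vec:
  fixes M :: "complex mat"
  assumes M: "M \<in> carrier_mat (Suc m) (Suc m)" and col_M: "col M 0 = e \<cdot>\<^sub>v unit_vec (Suc m) 0"
  shows "\<exists>B C. B \<in> carrier_mat 1 m \<and> C \<in> carrier_mat m m \<and>
    M = four_block_mat (mat 1 1 (\<lambda>_. e)) B (0\<^sub>m m 1) C"
proof -
  have M0: "M $$ (i, 0) = (if i = 0 then e else 0)" if "i < Suc m" for i
  proof -
    have "M $$ (i, 0) = col M 0 $ i" using M that by simp
    then show ?thesis unfolding col_M using that by auto
  qed
  obtain A1 B A0 C where split: "split_block M 1 1 = (A1, B, A0, C)"
    by (cases "split_block M 1 1") auto
  from split_block[OF split] M
  have "B \<in> carrier_mat 1 m" "C \<in> carrier_mat m m" "M = four_block_mat A1 B A0 C" by auto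
  moreover have "A1 = mat 1 1 (\<lambda>_. e)" and "A0 = 0\<^sub>m m 1"
    using split M M0 unfolding split_block_def Let_def by auto
  ultimately show ?thesis by blast
qed

lemma char_poly_block_form:
  fixes e :: complex
  assumes B: "B \<in> carrier_mat 1 m" and C: "C \<in> carrier_mat m m"
  shows "char_poly (four_block_mat (mat 1 1 (\<lambda>_. e)) B (0\<^sub>m m 1) C) = [:- e, 1:] * char_poly C"
proof -
  have X: "mat 1 1 (\<lambda>_. e) \<in> carrier_mat 1 1" by simp
  show ?thesis
    unfolding char_poly_four_block_zeros_col[OF X B C]
    by (simp add: char_poly_upper_triangular[of _ 1] upper_triangular_def diag_mat_def)
qed

lemma unitary_deflation:
  assumes A: "A \<in> carrier_mat (Suc m) (Suc m)" and e: "eigenvalue A e"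
  shows "\<exists>W B C. unitary_mat (Suc m) W \<and> B \<in> carrier_mat 1 m \<and> C \<in> carrier_mat m m \<and>
    conj_transpose W * A * W = four_block_mat (mat 1 1 (\<lambda>_. e)) B (0\<^sub>m m 1) C"
proof -
  obtain v where "eigenvector A v e" using e unfolding eigenvalue_def by blast
  then have v: "v \<in> carrier_vec (Suc m)" "v \<noteq> 0\<^sub>v (Suc m)" and Av: "A *\<^sub>v v = e \<cdot>\<^sub>v v"
    unfolding eigenvector_def using A by auto
  obtain W c where W: "unitary_mat (Suc m) W" and v_W: "v = c \<cdot>\<^sub>v col W 0"
    using exists_unitary_col0_multiple[OF v(1)] by auto
  note Wc = unitary_matD[OF W]
  have W0: "col W 0 = (1 / c) \<cdot>\<^sub>v v"
    using v_W v(2) Wc(1) by (cases "c = 0") (auto simp: smult_smult_assoc)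
  have "col (A * W) 0 = A *\<^sub>v col W 0"
    by (rule col_mult2[OF A Wc(1)]) simp
  also have "\<dots> = e \<cdot>\<^sub>v col W 0"
    unfolding W0 mult_mat_vec[OF A v(1)] Av by (simp add: smult_smult_assoc mult.commute)
  finally have "col (conj_transpose W * (A * W)) 0 = e \<cdot>\<^sub>v unit_vec (Suc m) 0"
    using A Wc(1) by (intro col0_conj_transpose_unitary_mult[OF W]) auto
  moreover have "conj_transpose W * (A * W) = conj_transpose W * A * W"
    using A Wc(1) by (simp add: assoc_mult_mat[of _ "Suc m" "Suc m" _ "Suc m" _ "Suc m"])
  moreover have "conj_transpose W * A * W \<in> carrier_mat (Suc m) (Suc m)"
    using A Wc(1) by (simp add: mult_carrier_mat[of _ "Suc m" "Suc m"])
  ultimately show ?thesis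
    using block_form_col0_unit_vec[of "conj_transpose W * A * W" m e] W by auto
qed

abbreviation block_diag_one :: "nat \<Rightarrow> complex mat \<Rightarrow> complex mat" where
  "block_diag_one m V \<equiv> four_block_mat (1\<^sub>m 1) (0\<^sub>m 1 m) (0\<^sub>m m 1) V"

lemma conj_transpose_block_diag_one:
  "V \<in> carrier_mat m m \<Longrightarrow> conj_transpose (block_diag_one m V) = block_diag_one m (conj_transpose V)"
  by (rule eq_matI) auto

lemma unitary_mat_block_diag_one:
  assumes "unitary_mat m V"
  shows "unitary_mat (Suc m) (block_diag_one m V)"
proof -
  note V = unitary_matD[OF assms]
  have "conj_transpose (block_diag_one m V) * block_diag_one m V = block_diag_one m (conj_transpose V * V)"
    unfolding conj_transpose_block_diag_one[OF V(1)] using V(1)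
    by (subst mult_four_block_mat[OF one_carrier_mat zero_carrier_mat zero_carrier_mat
          conj_transpose_carrier_mat[OF V(1)] one_carrier_mat zero_carrier_mat zero_carrier_mat V(1)])
      (simp add: mult_carrier_mat[OF conj_transpose_carrier_mat[OF V(1)] V(1)])
  also have "\<dots> = 1\<^sub>m (Suc m)"
    using four_block_one_mat[of 1 m] V(2) by simp
  finally show ?thesis
    unfolding unitary_mat_def using four_block_carrier_mat[OF one_carrier_mat V(1), of 1] by simp
qed

lemma conj_transpose_block_diag_one_mult_block:
  assumes V: "V \<in> carrier_mat m m" and X: "X \<in> carrier_mat 1 1"
    and B: "B \<in> carrier_mat 1 m" and C: "C \<in> carrier_mat m m"
  shows "conj_transpose (block_diag_one m V) * four_block_mat X B (0\<^sub>m m 1) C * block_diag_one m V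
    = four_block_mat X (B * V) (0\<^sub>m m 1) (conj_transpose V * C * V)"
proof -
  have VC: "conj_transpose V * C \<in> carrier_mat m m"
    using V C by (simp add: mult_carrier_mat[of _ m m])
  have "block_diag_one m (conj_transpose V) * four_block_mat X B (0\<^sub>m m 1) C
      = four_block_mat X B (0\<^sub>m m 1) (conj_transpose V * C)"
    by (subst mult_four_block_mat[OF one_carrier_mat zero_carrier_mat zero_carrier_mat
          conj_transpose_carrier_mat[OF V] X B zero_carrier_mat C])
      (use V X B C VC in simp)
  moreover have "four_block_mat X B (0\<^sub>m m 1) (conj_transpose V * C) * block_diag_one m V
      = four_block_mat X (B * V) (0\<^sub>m m 1) (conj_transpose V * C * V)"
    by (subst mult_four_block_mat[OF X B zero_carrier_mat VC
          one_carrier_mat zero_carrier_mat zero_carrier_mat V])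
      (use V X B C VC in simp)
  ultimately show ?thesis
    unfolding conj_transpose_block_diag_one[OF V] by simp
qed

lemma unitary_schur_decomposition:
  assumes "A \<in> carrier_mat n n" and "char_poly A = (\<Prod>e\<leftarrow>es. [:- e, 1:])"
  shows "\<exists>V. unitary_mat n V \<and> upper_triangular (conj_transpose V * A * V)
    \<and> diag_mat (conj_transpose V * A * V) = es"
  using assms
proof (induction es arbitrary: n A)
  case Nil
  then have "n = 0" using degree_monic_char_poly[of A n] by simp
  then show ?case
    using Nil.prems(1) unitary_mat_one[of 0]
    by (intro exI[of _ "1\<^sub>m 0"]) (auto simp: upper_triangular_def diag_mat_def)
next
  case (Cons e es)
  have A: "A \<in> carrier_mat n n" by fact
  have "n = Suc (length es)"
    using degree_monic_char_poly[OF A] degree_linear_factors[of uminus "e # es"] Cons.prems(2)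
    by simp
  then obtain m where n: "n = Suc m" by blast
  have "eigenvalue A e"
    unfolding eigenvalue_root_char_poly[OF A] Cons.prems(2) by simp
  then obtain W B C where W: "unitary_mat n W" and B: "B \<in> carrier_mat 1 m"
    and C: "C \<in> carrier_mat m m"
    and deflated: "conj_transpose W * A * W = four_block_mat (mat 1 1 (\<lambda>_. e)) B (0\<^sub>m m 1) C"
    using unitary_deflation[of A m e] A unfolding n by blast
  have X: "mat 1 1 (\<lambda>_. e) \<in> carrier_mat 1 1" by simp
  have "char_poly A = char_poly (conj_transpose W * A * W)"
    by (rule char_poly_similar[OF similar_mat_unitary[OF W A]])
  also have "\<dots> = [:- e, 1:] * char_poly C"
    unfolding deflated by (rule char_poly_block_form[OF B C])
  finally have "[:- e, 1:] * char_poly C = [:- e, 1:] * (\<Prod>e\<leftarrow>es. [:- e, 1:])"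
    using Cons.prems(2) by simp
  then have "char_poly C = (\<Prod>e\<leftarrow>es. [:- e, 1:])"
    by (simp del: mult_pCons_left)
  then obtain V where V: "unitary_mat m V" and ut: "upper_triangular (conj_transpose V * C * V)"
    and diag: "diag_mat (conj_transpose V * C * V) = es"
    using Cons.IH[OF C] by blast
  note Vc = unitary_matD[OF V] and Wc = unitary_matD[OF W]
  have VCV: "conj_transpose V * C * V \<in> carrier_mat m m"
    using Vc C by (simp add: mult_carrier_mat[of _ m m])
  define P where "P = block_diag_one m V"
  have P: "unitary_mat n P" unfolding P_def n by (rule unitary_mat_block_diag_one[OF V])
  note Pc = unitary_matD[OF P]
  have "conj_transpose (W * P) * A * (W * P) = conj_transpose P * (conj_transpose W * A * W) * P"
    unfolding conj_transpose_mult[OF Wc(1) Pc(1)] using Wc(1) Pc(1) A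
    by (simp add: assoc_mult_mat[of _ n n _ n _ n] mult_carrier_mat[of _ n n _ n])
  also have "\<dots> = four_block_mat (mat 1 1 (\<lambda>_. e)) (B * V) (0\<^sub>m m 1) (conj_transpose V * C * V)"
    unfolding deflated P_def by (rule conj_transpose_block_diag_one_mult_block[OF Vc(1) X B C])
  finally have T: "conj_transpose (W * P) * A * (W * P) = \<dots>" .
  show ?case
  proof (intro exI conjI)
    show "unitary_mat n (W * P)" by (rule unitary_mat_mult[OF W P])
    show "upper_triangular (conj_transpose (W * P) * A * (W * P))"
      unfolding T by (rule upper_triangular_four_block[OF X VCV _ ut]) (simp add: upper_triangular_def)
    show "diag_mat (conj_transpose (W * P) * A * (W * P)) = e # es"
      unfolding T diag_four_block_mat[OF X VCV] diag by (simp add: diag_mat_def)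
  qed
qed

section \<open>The determinant bound\<close>

lemma col_minus_mat:
  "A \<in> carrier_mat n m \<Longrightarrow> B \<in> carrier_mat n m \<Longrightarrow> j < m \<Longrightarrow> col (A - B) j = col A j - col B j"
  by (intro eq_vecI) auto

lemma norm_det_one_minus_unitary_mult_le:
  assumes Z: "Z \<in> carrier_mat n n" and U: "unitary_mat n U" and V: "unitary_mat n V"
  shows "cmod (det (1\<^sub>m n - U * Z)) \<le> (\<Prod>j<n. 1 + vec_l2_norm (col (Z * V) j))"
proof -
  note Uc = unitary_matD[OF U] and Vc = unitary_matD[OF V]
  define B where "B = U * (Z * V)"
  have ZV: "Z * V \<in> carrier_mat n n" using Z Vc(1) by simp
  have B: "B \<in> carrier_mat n n" unfolding B_def using Uc(1) ZV by simp
  have "(V - B) * conj_transpose V = V * conj_transpose V - B * conj_transpose V"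
    by (rule minus_mult_distrib_mat[OF Vc(1) B conj_transpose_carrier_mat[OF Vc(1)]])
  also have "B * conj_transpose V = U * Z"
    unfolding B_def using Uc(1) Z Vc
    by (simp add: assoc_mult_mat[of _ n n _ n _ n] mult_carrier_mat[of _ n n _ n])
  finally have "(V - B) * conj_transpose V = 1\<^sub>m n - U * Z"
    using Vc(3) by simp
  moreover have VB: "V - B \<in> carrier_mat n n" using minus_carrier_mat[OF B, of V] .
  ultimately have "cmod (det (1\<^sub>m n - U * Z)) = cmod (det (V - B))"
    using det_mult[OF VB conj_transpose_carrier_mat[OF Vc(1)]]
      norm_det_unitary[OF unitary_mat_conj_transpose[OF V]]
    by (simp add: norm_mult)
  also have "\<dots> \<le> (\<Prod>j<n. vec_l2_norm (col (V - B) j))"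
    by (rule hadamard_inequality[OF VB])
  also have "\<dots> \<le> (\<Prod>j<n. 1 + vec_l2_norm (col (Z * V) j))"
  proof (intro prod_mono conjI)
    fix j assume "j \<in> {..<n}"
    then have j: "j < n" by simp
    have "vec_l2_norm (col (V - B) j) \<le> vec_l2_norm (col V j) + vec_l2_norm (col B j)"
      unfolding col_minus_mat[OF Vc(1) B j] using Vc(1) B by (intro vec_l2_norm_minus_le) simp
    then show "vec_l2_norm (col (V - B) j) \<le> 1 + vec_l2_norm (col (Z * V) j)"
      unfolding B_def vec_l2_norm_col_unitary[OF V j] vec_l2_norm_col_unitary_mult[OF U ZV j] .
  qed (rule vec_l2_norm_nonneg)
  finally show ?thesis .
qed

lemma singular_values_col_norms:
  assumes Z: "Z \<in> carrier_mat n n" and sv: "singular_values n Z rs"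
  shows "\<exists>V. unitary_mat n V \<and> (\<forall>k<n. vec_l2_norm (col (Z * V) k) = rs ! k)"
proof -
  have len: "length rs = n" and rs: "\<And>k. k < n \<Longrightarrow> rs ! k \<ge> 0"
    and cp: "char_poly (conj_transpose Z * Z) = (\<Prod>e\<leftarrow>map (\<lambda>r. complex_of_real (r\<^sup>2)) rs. [:- e, 1:])"
    using sv unfolding singular_values_def by (auto simp: o_def)
  obtain V where V: "unitary_mat n V"
    and diag: "diag_mat (conj_transpose V * (conj_transpose Z * Z) * V) = map (\<lambda>r. complex_of_real (r\<^sup>2)) rs"
    using unitary_schur_decomposition[OF mult_carrier_mat[OF conj_transpose_carrier_mat[OF Z] Z] cp]
    by blast
  note Vc = unitary_matD[OF V]
  have ZV: "Z * V \<in> carrier_mat n n" using Z Vc(1) by simp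
  have gram: "conj_transpose V * (conj_transpose Z * Z) * V = conj_transpose (Z * V) * (Z * V)"
    unfolding conj_transpose_mult[OF Z Vc(1)] using Z Vc(1)
    by (simp add: assoc_mult_mat[of _ n n _ n _ n] mult_carrier_mat[of _ n n _ n])
  have "vec_l2_norm (col (Z * V) k) = rs ! k" if k: "k < n" for k
  proof -
    have "(complex_of_real (vec_l2_norm (col (Z * V) k)))\<^sup>2 = (complex_of_real (rs ! k))\<^sup>2"
      using arg_cong[OF diag, of "\<lambda>xs. xs ! k"] col_conj_transpose_mult_self_diag[OF ZV k]
        k len Vc(1) unfolding gram by (simp add: diag_mat_def)
    then have "(vec_l2_norm (col (Z * V) k))\<^sup>2 = (rs ! k)\<^sup>2"
      by (metis of_real_eq_iff of_real_power)
    then show ?thesis using rs[OF k] by (simp add: vec_l2_norm_nonneg)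
  qed
  then show ?thesis using V by blast
qed

lemma det_one_minus_gram_singular_values:
  assumes Z: "Z \<in> carrier_mat n n" and sv: "singular_values n Z rs"
  shows "det (1\<^sub>m n - conj_transpose Z * Z) = (\<Prod>k<n. complex_of_real (1 - (rs ! k)\<^sup>2))"
proof -
  have H: "conj_transpose Z * Z \<in> carrier_mat n n"
    by (rule mult_carrier_mat[OF conj_transpose_carrier_mat[OF Z] Z])
  have "1\<^sub>m n - conj_transpose Z * Z = - char_matrix (conj_transpose Z * Z) 1"
    using H by (intro eq_matI) (auto simp: char_matrix_def)
  then have "det (1\<^sub>m n - conj_transpose Z * Z) = poly (char_poly (conj_transpose Z * Z)) 1"
    by (simp add: char_poly_matrix[OF H])
  also have "\<dots> = (\<Prod>k<n. complex_of_real (1 - (rs ! k)\<^sup>2))"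
    using sv unfolding singular_values_def
    by (auto simp: poly_prod_list prod.list_conv_set_nth atLeast0LessThan o_def poly_prod)
  finally show ?thesis .
qed

lemma norm_det_one_minus_gram_singular_values:
  assumes Z: "Z \<in> carrier_mat n n" and sv: "singular_values n Z rs"
  shows "cmod (det (1\<^sub>m n - conj_transpose Z * Z))
    = (\<Prod>k<n. \<bar>1 - rs ! k\<bar>) * (\<Prod>k<n. 1 + rs ! k)"
proof -
  have "cmod (det (1\<^sub>m n - conj_transpose Z * Z)) = (\<Prod>k<n. \<bar>1 - (rs ! k)\<^sup>2\<bar>)"
    unfolding det_one_minus_gram_singular_values[OF Z sv] prod_norm[symmetric] norm_of_real ..
  also have "\<dots> = (\<Prod>k<n. \<bar>1 - rs ! k\<bar> * (1 + rs ! k))"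
  proof (intro prod.cong refl)
    fix k assume "k \<in> {..<n}"
    then have "1 + rs ! k \<ge> 0" using sv unfolding singular_values_def by auto
    moreover have "1 - (rs ! k)\<^sup>2 = (1 - rs ! k) * (1 + rs ! k)"
      by (simp add: power2_eq_square algebra_simps)
    ultimately show "\<bar>1 - (rs ! k)\<^sup>2\<bar> = \<bar>1 - rs ! k\<bar> * (1 + rs ! k)"
      by (simp add: abs_mult)
  qed
  finally show ?thesis by (simp add: prod.distrib)
qed

lemma div_le_mult_div_square:
  fixes a p d :: real
  assumes "a \<ge> 0" and "0 < d" and "d \<le> p"
  shows "a / p \<le> a * p / d\<^sup>2"
proof -
  have "a / p = a * p / p\<^sup>2" using assms by (simp add: power2_eq_square)
  also have "\<dots> \<le> a * p / d\<^sup>2"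
    using assms by (intro divide_left_mono power_mono mult_nonneg_nonneg) auto
  finally show ?thesis .
qed

theorem mainTheorem2:
  fixes n :: nat and Z U :: "complex mat" and rs :: "real list"
  assumes "Z \<in> carrier_mat n n"
    and "singular_values n Z rs"
    and "unitary_mat n U"
  shows "det (1\<^sub>m n - U * Z) \<noteq> 0 \<longrightarrow>
    (\<Prod>k<n. \<bar>1 - rs ! k\<bar> / (1 + rs ! k))
      \<le> cmod (det (1\<^sub>m n - conj_transpose Z * Z)) / (cmod (det (1\<^sub>m n - U * Z)))\<^sup>2"
proof
  assume nz: "det (1\<^sub>m n - U * Z) \<noteq> 0"
  define P where "P = (\<Prod>k<n. 1 + rs ! k)"
  obtain V where V: "unitary_mat n V" and norms: "\<forall>k<n. vec_l2_norm (col (Z * V) k) = rs ! k"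
    using singular_values_col_norms[OF assms(1,2)] by blast
  have "cmod (det (1\<^sub>m n - U * Z)) \<le> P"
    using norm_det_one_minus_unitary_mult_le[OF assms(1,3) V] norms unfolding P_def by simp
  moreover have "(\<Prod>k<n. \<bar>1 - rs ! k\<bar> / (1 + rs ! k)) = (\<Prod>k<n. \<bar>1 - rs ! k\<bar>) / P"
    unfolding P_def by (rule prod_dividef)
  ultimately show "(\<Prod>k<n. \<bar>1 - rs ! k\<bar> / (1 + rs ! k))
      \<le> cmod (det (1\<^sub>m n - conj_transpose Z * Z)) / (cmod (det (1\<^sub>m n - U * Z)))\<^sup>2"
    unfolding norm_det_one_minus_gram_singular_values[OF assms(1,2), folded P_def] using nz
    by (auto intro!: div_le_mult_div_square prod_nonneg)
qed

end
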